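(* There is an absolute constant $c>0$ such that the following holds. Let $F:\mathbb{R}\to\mathbb{R}$ be a strictly convex function, and let $A,B,C$ be finite sets of real numbers with $|A|=|B|=|C|=k$. Then \[ \max\{|A+B|,\ |F(A)+C|\}\ge c\,k^{5/4}. \] In particular, $|A+F(A)|\ge c\,k^{5/4}$ for every finite $A\subset\mathbb{R}$ with $|A|=k$.
   Context: $F(A)=\{F(a):a\in A\}$; for finite $X,Y\subset\mathbb{R}$, $X+Y=\{x+y:x\in X,y\in Y\}$. *)

theory Defs
  imports "HOL-Analysis.Analysis"
begin

definition strictly_convex :: "(real \<Rightarrow> real) \<Rightarrow> bool" where
  "strictly_convex F \<longleftrightarrow>
     (\<forall>x y t. x \<noteq> y \<and> 0 < t \<and> t < 1 \<longrightarrow>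
        F ((1 - t) * x + t * y) < (1 - t) * F x + t * F y)"

definition sumset :: "real set \<Rightarrow> real set \<Rightarrow> real set" where
  "sumset X Y = {x + y | x y. x \<in> X \<and> y \<in> Y}"

end

theory Submission
  imports Defs
begin

text \<open>
  Order A as a_0 < ... < a_(k-1). For b in B, c in C and i < k - 1 count the elements of
  A + B in the window [a_i + b, a_(i+1) + b) and the elements of F(A) + C in the window between
  F(a_i) + c and F(a_(i+1)) + c. For fixed b the first windows are disjoint; for fixed c so are
  the second ones, separately over the indices where F goes up and where it goes down. Hence,
  for M about k^(1/4), all but (|A+B| + 2|F(A)+C|) k^2 / M of the triples (b, c, i) have both
  counts at most M. Such a triple is determined by the two left end points, the two counts
  (which locate the right end points) and the direction of F: these fix the gap a_(i+1) - a_i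
  and the increment F(a_(i+1)) - F(a_i), hence the slope of the chord, and by strict convexity
  consecutive chords have distinct slopes. So k^3 is at most about
  M^2 |A+B| |F(A)+C| + (|A+B| + 2|F(A)+C|) k^2 / M, which forces max(|A+B|, |F(A)+C|) to be at
  least k^(5/4) / 20. For A + F(A), pass to a subset of A on which F is injective; it has at
  least half the size of A, as a strictly convex function is at most two-to-one.
\<close>

lemma strictly_convex_three_points:
  assumes "strictly_convex F" and "x < y" and "y < z"
  shows "(z - x) * F y < (z - y) * F x + (y - x) * F z"
proof -
  define t where "t = (y - x) / (z - x)"
  have "0 < t" "t < 1" using assms(2,3) by (auto simp: t_def field_simps)
  have t_scaled: "t * (z - x) = y - x" using assms(2,3) by (simp add: t_def)
  then have "(1 - t) * x + t * z = y" by (simp add: algebra_simps)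
  moreover have "F ((1 - t) * x + t * z) < (1 - t) * F x + t * F z"
    using assms \<open>0 < t\<close> \<open>t < 1\<close> unfolding strictly_convex_def by auto
  ultimately have "F y < (1 - t) * F x + t * F z" by simp
  then have "(z - x) * F y < (z - x) * ((1 - t) * F x + t * F z)"
    using assms(2,3) by simp
  also have "\<dots> = (z - x) * F x - (t * (z - x)) * F x + (t * (z - x)) * F z"
    by (simp add: algebra_simps)
  also have "\<dots> = (z - y) * F x + (y - x) * F z"
    unfolding t_scaled by (simp add: algebra_simps)
  finally show ?thesis .
qed

lemma strictly_convex_increasing_after:
  assumes "strictly_convex F" and "x < y" and "y < z" and "F x \<le> F y"
  shows "F y < F z"
proof -
  have "(z - x) * F y < (z - y) * F x + (y - x) * F z"
    using strictly_convex_three_points assms(1-3) by blast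
  moreover have "(z - y) * F x \<le> (z - y) * F y" using assms(3,4) by simp
  ultimately have "(y - x) * F y < (y - x) * F z" by (simp add: algebra_simps)
  then show ?thesis using assms(2) by simp
qed

lemma strictly_convex_decreasing_before:
  assumes "strictly_convex F" and "x < y" and "y < z" and "F z \<le> F y"
  shows "F y < F x"
proof -
  have "(z - x) * F y < (z - y) * F x + (y - x) * F z"
    using strictly_convex_three_points assms(1-3) by blast
  moreover have "(y - x) * F z \<le> (y - x) * F y" using assms(2,4) by simp
  ultimately have "(z - y) * F y < (z - y) * F x" by (simp add: algebra_simps)
  then show ?thesis using assms(3) by simp
qed

lemma strictly_convex_slope_less:
  assumes "strictly_convex F" and "x < y" and "y < z"
  shows "(F y - F x) / (y - x) < (F z - F y) / (z - y)"
proof -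
  have "(z - x) * F y < (z - y) * F x + (y - x) * F z"
    using strictly_convex_three_points assms by blast
  then have "(F y - F x) * (z - y) < (F z - F y) * (y - x)"
    by (simp add: algebra_simps)
  with assms(2,3) show ?thesis by (simp add: divide_simps mult.commute)
qed

lemma strictly_convex_consecutive_slopes_less:
  assumes "strictly_convex F" and "\<And>i j. i < j \<Longrightarrow> j < k \<Longrightarrow> a i < a j"
    and "m < n" and "Suc n < k"
  shows "(F (a (Suc m)) - F (a m)) / (a (Suc m) - a m)
       < (F (a (Suc n)) - F (a n)) / (a (Suc n) - a n)"
proof (cases "Suc m = n")
  case True
  then show ?thesis using strictly_convex_slope_less assms by auto
next
  case False
  then have "Suc m < n" using assms(3) by simp
  have "(F (a (Suc m)) - F (a m)) / (a (Suc m) - a m)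
      < (F (a n) - F (a (Suc m))) / (a n - a (Suc m))"
    using strictly_convex_slope_less[OF assms(1)] assms(2,4) \<open>Suc m < n\<close> by auto
  also have "\<dots> < (F (a (Suc n)) - F (a n)) / (a (Suc n) - a n)"
    using strictly_convex_slope_less[OF assms(1)] assms(2,4) \<open>Suc m < n\<close> by auto
  finally show ?thesis .
qed

lemma strictly_convex_card_level_set_le_2:
  assumes "strictly_convex F" and "finite A"
  shows "card {x \<in> A. F x = y} \<le> 2"
proof (rule ccontr)
  define S where "S = {x \<in> A. F x = y}"
  assume "\<not> card {x \<in> A. F x = y} \<le> 2"
  then have "3 \<le> card S" by (simp add: S_def)
  have "finite S" using assms(2) by (simp add: S_def)
  moreover have "S \<noteq> {}" using \<open>3 \<le> card S\<close> by auto
  ultimately have "Min S \<in> S" "Max S \<in> S" by simp_all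
  have "card {Min S, Max S} \<le> 2" by (simp add: card_insert_if)
  then have "card (S - {Min S, Max S}) \<noteq> 0"
    using diff_card_le_card_Diff[of "{Min S, Max S}" S] \<open>3 \<le> card S\<close> by simp
  then obtain w where "w \<in> S - {Min S, Max S}" by (metis card.empty ex_in_conv)
  then have w: "w \<in> S" "w \<noteq> Min S" "w \<noteq> Max S" by auto
  then have "Min S < w" "w < Max S"
    using \<open>finite S\<close> by (auto simp: order.not_eq_order_implies_strict)
  moreover have "F (Min S) = y" "F w = y" "F (Max S) = y"
    using \<open>Min S \<in> S\<close> \<open>Max S \<in> S\<close> w by (auto simp: S_def)
  ultimately show False using strictly_convex_increasing_after[OF assms(1)] by fastforce
qed

lemma strictly_convex_card_le_twice_card_image:
  assumes "strictly_convex F" and "finite A"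
  shows "card A \<le> 2 * card (F ` A)"
proof -
  have "A = (\<Union>y \<in> F ` A. {x \<in> A. F x = y})" by auto
  then have "card A \<le> (\<Sum>y \<in> F ` A. card {x \<in> A. F x = y})"
    using assms(2) card_UN_le[of "F ` A" "\<lambda>y. {x \<in> A. F x = y}"] by simp
  also have "\<dots> \<le> (\<Sum>y \<in> F ` A. 2)"
    by (intro sum_mono strictly_convex_card_level_set_le_2 assms)
  finally show ?thesis by simp
qed

lemma card_interval_eq_imp_eq:
  fixes S :: "'a :: linorder set"
  assumes "finite S" and "u \<in> S" and "v \<in> S" and "x \<le> u" and "x \<le> v"
    and "card {s \<in> S. x \<le> s \<and> s < u} = card {s \<in> S. x \<le> s \<and> s < v}"
  shows "u = v"
proof -
  have less: "card {s \<in> S. x \<le> s \<and> s < u} < card {s \<in> S. x \<le> s \<and> s < v}"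
    if "u \<in> S" "x \<le> u" "u < v" for u v
    using \<open>finite S\<close> that by (intro psubset_card_mono) auto
  show ?thesis
    using less[of u v] less[of v u] assms by (cases u v rule: linorder_cases) auto
qed

lemma sum_card_disjoint_intervals_le:
  fixes S :: "'a :: linorder set"
  assumes "finite S" and "finite I"
    and "\<And>i j. i \<in> I \<Longrightarrow> j \<in> I \<Longrightarrow> i \<noteq> j \<Longrightarrow> h i \<le> l j \<or> h j \<le> l i"
  shows "(\<Sum>i \<in> I. card {s \<in> S. l i \<le> s \<and> s < h i}) \<le> card S"
proof -
  have "(\<Sum>i \<in> I. card {s \<in> S. l i \<le> s \<and> s < h i})
      = card (\<Union>i \<in> I. {s \<in> S. l i \<le> s \<and> s < h i})"
    using assms by (subst card_UN_disjoint) fastforce+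
  also have "\<dots> \<le> card S" using assms(1) by (intro card_mono) auto
  finally show ?thesis .
qed

lemma finite_sumset: "finite X \<Longrightarrow> finite Y \<Longrightarrow> finite (sumset X Y)"
proof -
  have "sumset X Y = (\<lambda>(x, y). x + y) ` (X \<times> Y)" by (auto simp: sumset_def)
  then show "finite X \<Longrightarrow> finite Y \<Longrightarrow> finite (sumset X Y)" by simp
qed

lemma sumset_commute: "sumset X Y = sumset Y X"
  unfolding sumset_def using add.commute by blast

lemma sumset_mono: "X \<subseteq> X' \<Longrightarrow> Y \<subseteq> Y' \<Longrightarrow> sumset X Y \<subseteq> sumset X' Y'"
  unfolding sumset_def by blast

lemma card_sumset_pos:
  assumes "finite X" "finite Y" "X \<noteq> {}" "Y \<noteq> {}"
  shows "0 < card (sumset X Y)"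
  using assms finite_sumset[OF assms(1,2)] by (auto simp: sumset_def card_gt_0_iff)

lemma exists_subset_inj_on_same_image:
  "\<exists>A' \<subseteq> A. inj_on f A' \<and> f ` A' = f ` A"
proof (intro exI conjI)
  show "inv_into A f ` f ` A \<subseteq> A" by (auto intro: inv_into_into)
  show "inj_on f (inv_into A f ` f ` A)"
    by (auto intro!: inj_onI simp: f_inv_into_f)
  show "f ` inv_into A f ` f ` A = f ` A"
    by (rule image_inv_into_cancel[OF refl order_refl])
qed

locale sumset_windows =
  fixes F :: "real \<Rightarrow> real" and a :: "nat \<Rightarrow> real" and k :: nat
    and B C X Y :: "real set"
  assumes convex: "strictly_convex F"
    and a_less: "\<And>i j. i < j \<Longrightarrow> j < k \<Longrightarrow> a i < a j"
    and finite_B: "finite B" and finite_C: "finite C"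
    and finite_X: "finite X" and finite_Y: "finite Y"
    and shift_mem_X: "\<And>i b. i < k \<Longrightarrow> b \<in> B \<Longrightarrow> a i + b \<in> X"
    and shift_mem_Y: "\<And>i c. i < k \<Longrightarrow> c \<in> C \<Longrightarrow> F (a i) + c \<in> Y"
begin

definition window_X :: "nat \<Rightarrow> real \<Rightarrow> nat" where
  "window_X i b = card {x \<in> X. a i + b \<le> x \<and> x < a (Suc i) + b}"

definition lower_Y :: "nat \<Rightarrow> real \<Rightarrow> real" where
  "lower_Y i c = min (F (a i)) (F (a (Suc i))) + c"

definition upper_Y :: "nat \<Rightarrow> real \<Rightarrow> real" where
  "upper_Y i c = max (F (a i)) (F (a (Suc i))) + c"

definition window_Y :: "nat \<Rightarrow> real \<Rightarrow> nat" where
  "window_Y i c = card {y \<in> Y. lower_Y i c \<le> y \<and> y < upper_Y i c}"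

definition triples :: "(real \<times> real \<times> nat) set" where
  "triples = B \<times> C \<times> {..<k - 1}"

definition sparse_triples :: "nat \<Rightarrow> (real \<times> real \<times> nat) set" where
  "sparse_triples M = {(b, c, i) \<in> triples. window_X i b \<le> M \<and> window_Y i c \<le> M}"

definition signature :: "real \<times> real \<times> nat \<Rightarrow> real \<times> nat \<times> real \<times> nat \<times> bool" where
  "signature = (\<lambda>(b, c, i).
     (a i + b, window_X i b, lower_Y i c, window_Y i c, F (a i) \<le> F (a (Suc i))))"

lemma finite_triples: "finite triples"
  using finite_B finite_C by (simp add: triples_def)

lemma card_triples: "card triples = card B * card C * (k - 1)"
  by (simp add: triples_def card_cartesian_product)

lemma a_le: "i \<le> j \<Longrightarrow> j < k \<Longrightarrow> a i \<le> a j"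
  using a_less by (metis order_le_less order_refl)

lemma sum_window_X_le: "(\<Sum>i<k - 1. window_X i b) \<le> card X"
  unfolding window_X_def
proof (rule sum_card_disjoint_intervals_le[OF finite_X finite_lessThan])
  fix i j assume "i \<in> {..<k - 1}" "j \<in> {..<k - 1}" "i \<noteq> j"
  then show "a (Suc i) + b \<le> a j + b \<or> a (Suc j) + b \<le> a i + b"
    using a_le[of "Suc i" j] a_le[of "Suc j" i] by (cases "i < j") auto
qed

text \<open>
  Where F goes up between a_i and a_(i+1), it keeps going up afterwards, and where it goes
  down, it went down before; so each of the two families of windows is disjoint.
\<close>

lemma sum_window_Y_le: "(\<Sum>i<k - 1. window_Y i c) \<le> 2 * card Y"
proof -
  define up where "up = {i \<in> {..<k - 1}. F (a i) \<le> F (a (Suc i))}"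
  define down where "down = {i \<in> {..<k - 1}. \<not> F (a i) \<le> F (a (Suc i))}"
  have up_disjoint: "upper_Y i c \<le> lower_Y j c" if "i \<in> up" "j \<in> up" "i < j" for i j
  proof -
    have "F (a (Suc i)) \<le> F (a j)"
      using that strictly_convex_increasing_after[OF convex, of "a i" "a (Suc i)" "a j"]
        a_less[of i "Suc i"] a_less[of "Suc i" j]
      by (cases "Suc i = j") (auto simp: up_def)
    then show ?thesis using that by (auto simp: upper_Y_def lower_Y_def up_def)
  qed
  have down_disjoint: "upper_Y j c \<le> lower_Y i c" if "i \<in> down" "j \<in> down" "i < j" for i j
  proof -
    have "F (a j) \<le> F (a (Suc i))"
      using that strictly_convex_decreasing_before[OF convex, of "a (Suc i)" "a j" "a (Suc j)"]
        a_less[of "Suc i" j] a_less[of j "Suc j"]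
      by (cases "Suc i = j") (auto simp: down_def)
    then show ?thesis using that by (auto simp: upper_Y_def lower_Y_def down_def)
  qed
  have "(\<Sum>i<k - 1. window_Y i c) = (\<Sum>i \<in> up. window_Y i c) + (\<Sum>i \<in> down. window_Y i c)"
    by (subst sum.union_disjoint[symmetric]) (auto simp: up_def down_def intro: sum.cong)
  also have "(\<Sum>i \<in> up. window_Y i c) \<le> card Y"
    unfolding window_Y_def
    by (rule sum_card_disjoint_intervals_le[OF finite_Y])
      (use up_disjoint in \<open>auto simp: up_def dest: linorder_neqE\<close>)
  also have "(\<Sum>i \<in> down. window_Y i c) \<le> card Y"
    unfolding window_Y_def
    by (rule sum_card_disjoint_intervals_le[OF finite_Y])
      (use down_disjoint in \<open>auto simp: down_def dest: linorder_neqE\<close>)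
  finally show ?thesis by simp
qed

lemma card_dense_triples_le:
  "M * card (triples - sparse_triples M) \<le> (card X + 2 * card Y) * card B * card C"
proof -
  have "M * card (triples - sparse_triples M) = (\<Sum>(b, c, i) \<in> triples - sparse_triples M. M)"
    by simp
  also have "\<dots> \<le> (\<Sum>(b, c, i) \<in> triples - sparse_triples M. window_X i b + window_Y i c)"
    by (intro sum_mono) (auto simp: sparse_triples_def)
  also have "\<dots> \<le> (\<Sum>(b, c, i) \<in> triples. window_X i b + window_Y i c)"
    using finite_triples by (intro sum_mono2) auto
  also have "\<dots> = (\<Sum>b \<in> B. \<Sum>c \<in> C. (\<Sum>i<k - 1. window_X i b) + (\<Sum>i<k - 1. window_Y i c))"
    unfolding triples_def sum.cartesian_product[symmetric] by (simp add: sum.distrib)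
  also have "\<dots> \<le> (\<Sum>b \<in> B. \<Sum>c \<in> C. card X + 2 * card Y)"
    by (intro sum_mono add_mono sum_window_X_le sum_window_Y_le)
  finally show ?thesis by (simp add: ac_simps)
qed

lemma eq_of_same_chord:
  assumes "Suc i < k" and "Suc j < k"
    and "a (Suc i) - a i = a (Suc j) - a j"
    and "F (a (Suc i)) - F (a i) = F (a (Suc j)) - F (a j)"
  shows "i = j"
  using strictly_convex_consecutive_slopes_less[where a = a and k = k, OF convex a_less, of i j]
    strictly_convex_consecutive_slopes_less[where a = a and k = k, OF convex a_less, of j i] assms
  by (cases i j rule: linorder_cases) auto

text \<open>
  The two counts locate the right end points of the windows, because both end points of
  a window belong to the set being counted.
\<close>

lemma signature_inj: "inj_on signature triples"
proof (rule inj_onI)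
  fix t t' assume "t \<in> triples" "t' \<in> triples" and same: "signature t = signature t'"
  obtain b c i b' c' j where t: "t = (b, c, i)" and t': "t' = (b', c', j)"
    by (cases t, cases t') auto
  have ij: "Suc i < k" "Suc j < k" "b \<in> B" "b' \<in> B" "c \<in> C" "c' \<in> C"
    using \<open>t \<in> triples\<close> \<open>t' \<in> triples\<close> by (auto simp: t t' triples_def)
  have left_X: "a i + b = a j + b'" and "window_X i b = window_X j b'"
    and left_Y: "lower_Y i c = lower_Y j c'" and "window_Y i c = window_Y j c'"
    and up: "F (a i) \<le> F (a (Suc i)) \<longleftrightarrow> F (a j) \<le> F (a (Suc j))"
    using same by (auto simp: signature_def t t')
  have "a (Suc i) + b = a (Suc j) + b'"
  proof (rule card_interval_eq_imp_eq[OF finite_X])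
    show "a (Suc i) + b \<in> X" "a (Suc j) + b' \<in> X" using shift_mem_X ij by auto
    show "a i + b \<le> a (Suc i) + b" "a i + b \<le> a (Suc j) + b'"
      using a_less[of i "Suc i"] a_less[of j "Suc j"] left_X ij by auto
    show "card {s \<in> X. a i + b \<le> s \<and> s < a (Suc i) + b}
        = card {s \<in> X. a i + b \<le> s \<and> s < a (Suc j) + b'}"
      using \<open>window_X i b = window_X j b'\<close> left_X by (simp add: window_X_def)
  qed
  with left_X have gap: "a (Suc i) - a i = a (Suc j) - a j" by simp
  have "upper_Y i c = upper_Y j c'"
  proof (rule card_interval_eq_imp_eq[OF finite_Y])
    show "upper_Y i c \<in> Y" "upper_Y j c' \<in> Y"
      using shift_mem_Y ij by (auto simp: upper_Y_def max_def)
    show "lower_Y i c \<le> upper_Y i c" "lower_Y i c \<le> upper_Y j c'"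
      using left_Y by (auto simp: lower_Y_def upper_Y_def)
    show "card {s \<in> Y. lower_Y i c \<le> s \<and> s < upper_Y i c}
        = card {s \<in> Y. lower_Y i c \<le> s \<and> s < upper_Y j c'}"
      using \<open>window_Y i c = window_Y j c'\<close> left_Y by (simp add: window_Y_def)
  qed
  with left_Y up have "F (a (Suc i)) - F (a i) = F (a (Suc j)) - F (a j)"
    by (auto simp: lower_Y_def upper_Y_def min_def max_def split: if_splits)
  with gap ij have "i = j" by (intro eq_of_same_chord)
  with left_X left_Y show "t = t'" by (simp add: t t' lower_Y_def)
qed

lemma card_sparse_triples_le:
  "card (sparse_triples M) \<le> card X * (M + 1) * card Y * (M + 1) * 2"
proof -
  have "signature ` sparse_triples M \<subseteq> X \<times> {..M} \<times> Y \<times> {..M} \<times> (UNIV :: bool set)"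
    using shift_mem_X shift_mem_Y
    by (auto simp: sparse_triples_def signature_def triples_def lower_Y_def min_def)
  moreover have "inj_on signature (sparse_triples M)"
    using signature_inj by (rule inj_on_subset) (auto simp: sparse_triples_def)
  ultimately have "card (sparse_triples M) \<le> card (X \<times> {..M} \<times> Y \<times> {..M} \<times> (UNIV :: bool set))"
    using finite_X finite_Y by (intro card_inj_on_le) auto
  also have "\<dots> = card X * (M + 1) * card Y * (M + 1) * 2"
    by (simp only: card_cartesian_product card_atMost card_UNIV_bool Suc_eq_plus1 mult.assoc)
  finally show ?thesis .
qed

lemma triple_count:
  "M * (card B * card C * (k - 1))
     \<le> M * (card X * (M + 1) * card Y * (M + 1) * 2) + (card X + 2 * card Y) * card B * card C"
proof -
  have "sparse_triples M \<subseteq> triples" by (auto simp: sparse_triples_def)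
  then have "card triples = card (sparse_triples M) + card (triples - sparse_triples M)"
    using finite_triples by (metis card_Diff_subset card_mono finite_subset le_add_diff_inverse)
  then have "M * card triples = M * card (sparse_triples M) + M * card (triples - sparse_triples M)"
    by (simp add: add_mult_distrib2)
  then show ?thesis
    using card_triples card_sparse_triples_le[of M] card_dense_triples_le[of M]
    by (metis add_mono mult_le_mono2)
qed

end

lemma triple_count_contradiction:
  fixes r m N :: real
  assumes "1 \<le> m" and "m \<le> r" and "r \<le> 2 * m" and "2 \<le> r ^ 4" and "0 \<le> N"
    and "m * ((r ^ 4 - 1) * r ^ 4 * r ^ 4) \<le> 2 * m * N\<^sup>2 * (m + 1)\<^sup>2 + 3 * N * r ^ 4 * r ^ 4"
  shows "r ^ 5 / 20 \<le> N"
proof (rule ccontr)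
  assume "\<not> r ^ 5 / 20 \<le> N"
  then have "N < r ^ 5 / 20" by simp
  have "0 < r" using assms(1,2) by simp
  have "N\<^sup>2 \<le> (r ^ 5 / 20)\<^sup>2" "(m + 1)\<^sup>2 \<le> (2 * r)\<^sup>2"
    using \<open>N < r ^ 5 / 20\<close> assms(1,2,5) by (intro power_mono; linarith)+
  then have "2 * m * N\<^sup>2 * (m + 1)\<^sup>2 \<le> 2 * r * (r ^ 5 / 20)\<^sup>2 * (2 * r)\<^sup>2"
    using assms(1,2) by (intro mult_mono) auto
  also have "\<dots> = r ^ 13 / 50" by (simp add: field_simps) algebra
  finally have small_first: "2 * m * N\<^sup>2 * (m + 1)\<^sup>2 \<le> r ^ 13 / 50" .
  have "3 * N * r ^ 4 * r ^ 4 < 3 * (r ^ 5 / 20) * r ^ 4 * r ^ 4"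
    using \<open>N < r ^ 5 / 20\<close> \<open>0 < r\<close> by (intro mult_strict_right_mono) auto
  also have "\<dots> = 3 * r ^ 13 / 20" by (simp add: field_simps)
  finally have small_second: "3 * N * r ^ 4 * r ^ 4 < 3 * r ^ 13 / 20" .
  have "(r / 2) * ((r ^ 4 / 2) * r ^ 4 * r ^ 4) \<le> m * ((r ^ 4 - 1) * r ^ 4 * r ^ 4)"
    using assms(1,3,4) by (intro mult_mono) auto
  moreover have "(r / 2) * ((r ^ 4 / 2) * r ^ 4 * r ^ 4) = r ^ 13 / 4"
    by (simp add: field_simps) algebra
  ultimately have "r ^ 13 / 4 < r ^ 13 / 50 + 3 * r ^ 13 / 20"
    using assms(6) small_first small_second by linarith
  with \<open>0 < r\<close> show False by simp
qed

lemma powr_five_quarters_le_of_triple_count: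
  fixes k x y :: nat
  defines "M \<equiv> nat \<lfloor>real k powr (1/4)\<rfloor>"
  assumes "2 \<le> k"
    and "M * (k * k * (k - 1)) \<le> M * (x * (M + 1) * y * (M + 1) * 2) + (x + 2 * y) * k * k"
  shows "real k powr (5/4) / 20 \<le> real (max x y)"
proof -
  define r where "r = real k powr (1/4)"
  have k_eq: "real k = r ^ 4" and "real k powr (5/4) = r ^ 5"
    using \<open>2 \<le> k\<close> by (simp_all add: r_def powr_power)
  have "2 \<le> r ^ 4" using \<open>2 \<le> k\<close> unfolding k_eq[symmetric] by simp
  have "1 \<le> r" unfolding r_def using \<open>2 \<le> k\<close> by (intro ge_one_powr_ge_zero) auto
  have "1 \<le> real M" "real M \<le> r" "r < real M + 1"
    using \<open>1 \<le> r\<close> by (simp_all add: M_def r_def)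
  then have "r \<le> 2 * real M" by linarith
  define N where "N = real (max x y)"
  have "real x \<le> N" "real y \<le> N" by (auto simp: N_def)
  have "real M * ((real k - 1) * real k * real k)
      \<le> real M * (real x * (real M + 1) * real y * (real M + 1) * 2)
        + (real x + 2 * real y) * real k * real k"
  proof -
    have "real (M * (k * k * (k - 1)))
        \<le> real (M * (x * (M + 1) * y * (M + 1) * 2) + (x + 2 * y) * k * k)"
      using assms(3) by (simp only: of_nat_le_iff)
    then show ?thesis using \<open>2 \<le> k\<close> by (simp add: of_nat_diff algebra_simps)
  qed
  also have "\<dots> \<le> 2 * real M * N\<^sup>2 * (real M + 1)\<^sup>2 + 3 * N * real k * real k"
  proof (rule add_mono)
    have "real x * real y \<le> N * N"
      using \<open>real x \<le> N\<close> \<open>real y \<le> N\<close> by (intro mult_mono) auto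
    then show "real M * (real x * (real M + 1) * real y * (real M + 1) * 2)
        \<le> 2 * real M * N\<^sup>2 * (real M + 1)\<^sup>2"
      using \<open>1 \<le> real M\<close> by (simp add: power2_eq_square mult_ac mult_left_mono)
    show "(real x + 2 * real y) * real k * real k \<le> 3 * N * real k * real k"
      using \<open>real x \<le> N\<close> \<open>real y \<le> N\<close> by (intro mult_right_mono) auto
  qed
  finally have "r ^ 5 / 20 \<le> N"
    unfolding k_eq
    by (rule triple_count_contradiction[rotated -1])
      (use \<open>1 \<le> real M\<close> \<open>real M \<le> r\<close> \<open>r \<le> 2 * real M\<close> \<open>2 \<le> r ^ 4\<close> in
        \<open>auto simp: N_def\<close>)
  then show ?thesis using \<open>real k powr (5/4) = r ^ 5\<close> by (simp add: N_def)
qed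

lemma max_card_sumsets_ge_of_two_le:
  assumes "strictly_convex F" and "finite A" "finite B" "finite C"
    and "card A = k" "card B = k" "card C = k" and "2 \<le> k"
  shows "real k powr (5/4) / 20 \<le> real (max (card (sumset A B)) (card (sumset (F ` A) C)))"
proof -
  define X where "X = sumset A B"
  define Y where "Y = sumset (F ` A) C"
  obtain xs where "sorted_wrt (<) xs" "set xs = A"
    using ex1_sorted_list_for_set_if_finite[OF \<open>finite A\<close>] by blast
  then have "length xs = k"
    using \<open>card A = k\<close> by (metis distinct_card strict_sorted_iff)
  interpret sumset_windows F "\<lambda>i. xs ! i" k B C X Y
  proof
    show "xs ! i < xs ! j" if "i < j" "j < k" for i j
      using sorted_wrt_nth_less[OF \<open>sorted_wrt (<) xs\<close>] that \<open>length xs = k\<close> by simp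
    show "xs ! i + b \<in> X" if "i < k" "b \<in> B" for i b
      using that nth_mem[of i xs] \<open>set xs = A\<close> \<open>length xs = k\<close>
      unfolding X_def sumset_def by blast
    show "F (xs ! i) + c \<in> Y" if "i < k" "c \<in> C" for i c
      using that nth_mem[of i xs] \<open>set xs = A\<close> \<open>length xs = k\<close>
      unfolding Y_def sumset_def by blast
  qed (use assms X_def Y_def finite_sumset in auto)
  show ?thesis
    unfolding X_def[symmetric] Y_def[symmetric]
    using triple_count \<open>card B = k\<close> \<open>card C = k\<close>
    by (intro powr_five_quarters_le_of_triple_count \<open>2 \<le> k\<close>) simp
qed

lemma max_card_sumsets_ge:
  assumes "strictly_convex F" and "finite A" "finite B" "finite C"
    and "card A = k" "card B = k" "card C = k"
  shows "real k powr (5/4) / 20 \<le> real (max (card (sumset A B)) (card (sumset (F ` A) C)))"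
proof (cases "2 \<le> k")
  case True
  then show ?thesis using max_card_sumsets_ge_of_two_le assms by blast
next
  case False
  then consider "k = 0" | "k = 1" by linarith
  then show ?thesis
  proof cases
    case 2
    then have "0 < card (sumset A B)"
      using assms by (intro card_sumset_pos) auto
    then show ?thesis using 2 by simp
  qed simp
qed

lemma card_sumset_image_ge:
  assumes "strictly_convex F" and "finite A" and "card A = k"
  shows "real k powr (5/4) / 80 \<le> real (card (sumset A (F ` A)))"
proof -
  obtain A' where "A' \<subseteq> A" "inj_on F A'" and same_image: "F ` A' = F ` A"
    using exists_subset_inj_on_same_image[of A F] by blast
  define k' where "k' = card A'"
  then have "card A' = k'" by simp
  have "finite A'" using \<open>A' \<subseteq> A\<close> \<open>finite A\<close> by (rule finite_subset)
  have "card (F ` A') = k'" using \<open>inj_on F A'\<close> by (simp add: card_image k'_def)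
  have "real k \<le> 2 * real k'"
    using strictly_convex_card_le_twice_card_image[OF assms(1,2)] same_image
      \<open>card (F ` A') = k'\<close> assms(3) by simp
  have "(2::real) powr (5/4) \<le> 2 powr 2" by (rule powr_mono) auto
  then have "(2::real) powr (5/4) \<le> 4" by (simp add: powr_numeral)
  have "real k' powr (5/4) / 20 \<le> real (max (card (sumset A' (F ` A'))) (card (sumset (F ` A') A')))"
    using \<open>finite A'\<close> \<open>card A' = k'\<close> \<open>card (F ` A') = k'\<close>
    by (intro max_card_sumsets_ge assms(1) finite_imageI)
  also have "\<dots> = real (card (sumset A' (F ` A)))"
    unfolding same_image sumset_commute[of "F ` A" A'] by simp
  also have "\<dots> \<le> real (card (sumset A (F ` A)))"
    using \<open>A' \<subseteq> A\<close> assms(2) by (simp add: card_mono finite_sumset sumset_mono)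
  finally have "real k' powr (5/4) \<le> 20 * real (card (sumset A (F ` A)))" by simp
  have "real k powr (5/4) \<le> (2 * real k') powr (5/4)"
    using \<open>real k \<le> 2 * real k'\<close> by (intro powr_mono2) simp_all
  also have "\<dots> = 2 powr (5/4) * real k' powr (5/4)"
    by (simp add: powr_mult)
  also have "\<dots> \<le> 4 * real k' powr (5/4)"
    using \<open>(2::real) powr (5/4) \<le> 4\<close> by (rule mult_right_mono) simp
  also have "\<dots> \<le> 4 * (20 * real (card (sumset A (F ` A))))"
    using \<open>real k' powr (5/4) \<le> 20 * real (card (sumset A (F ` A)))\<close> by simp
  finally show ?thesis by simp
qed

theorem theorem4:
  shows "\<exists>c::real. c > 0 \<and>
    (\<forall>(F::real \<Rightarrow> real) (A::real set) (B::real set) (C::real set) (k::nat).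
       strictly_convex F \<longrightarrow> finite A \<longrightarrow> finite B \<longrightarrow> finite C \<longrightarrow>
       card A = k \<longrightarrow> card B = k \<longrightarrow> card C = k \<longrightarrow>
       real (max (card (sumset A B)) (card (sumset (F ` A) C))) \<ge> c * real k powr (5/4))
    \<and> (\<exists>c'::real. c' > 0 \<and> (\<forall>(F::real \<Rightarrow> real) (A::real set) (k::nat).
       strictly_convex F \<longrightarrow> finite A \<longrightarrow> card A = k \<longrightarrow>
       real (card (sumset A (F ` A))) \<ge> c' * real k powr (5/4)))"
proof (rule exI[of _ "1/20"], intro conjI exI[of _ "1/80"] allI impI)
  show "1/20 * real k powr (5/4) \<le> real (max (card (sumset A B)) (card (sumset (F ` A) C)))"
    if "strictly_convex F" "finite A" "finite B" "finite C" "card A = k" "card B = k" "card C = k"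
    for F A B C k
    using max_card_sumsets_ge[OF that] by simp
  show "1/80 * real k powr (5/4) \<le> real (card (sumset A (F ` A)))"
    if "strictly_convex F" "finite A" "card A = k" for F A k
    using card_sumset_image_ge[OF that] by simp
qed simp_all

end
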